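(* Let $R_{\rm f}''>0$ and let $v_{\rm f}\in C^2([0,R_{\rm f}''];\mathbb{R}_+)$ satisfy $v_{\rm f}(R_{\rm f}'')>0$ and, for every $\rho\in[0,R_{\rm f}'']$, $v_{\rm f}'(\rho)\le 0$, $v_{\rm f}(\rho)+\rho\,v_{\rm f}'(\rho)>0$ and $2v_{\rm f}'(\rho)+\rho\,v_{\rm f}''(\rho)\le 0$. Let $R_{\rm f}'\in\,]0,R_{\rm f}''[$ and let $p\in C^2([R_{\rm f}',+\infty[;\mathbb{R})$ satisfy $p'(\rho)>0$ and $2p'(\rho)+\rho\,p''(\rho)>0$ for every $\rho\ge R_{\rm f}'$. Assume that $\rho\mapsto v_{\rm f}(\rho)+p(\rho)$ is increasing on $[R_{\rm f}',R_{\rm f}'']$ and that $v_{\rm f}(\rho)<\rho\,p'(\rho)$ for every $\rho\in[R_{\rm f}',R_{\rm f}'']$. Set $V_{\rm f}\doteq v_{\rm f}(R_{\rm f}'')$, $W_{\max}\doteq p(R_{\rm f}'')+V_{\rm f}$, $W_{\rm c}\doteq p(R_{\rm f}')+v_{\rm f}(R_{\rm f}')$ and $R_{\max}\doteq p^{-1}(W_{\max})$. Then for every $w\in[W_{\rm c},W_{\max}]$ the graphs of the maps $[0,R_{\rm f}'']\ni\rho\mapsto\rho\,v_{\rm f}(\rho)$ and $[R_{\rm f}',R_{\max}]\ni\rho\mapsto\rho\,[w-p(\rho)]$ intersect at a point $\rho=\rho_{\rm f}(w)>0$. Moreover, the second map is strictly decreasing at $\rho_{\rm f}(w)$ (capacity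 drop). *)

theory Defs
  imports "HOL-Analysis.Analysis"
begin

end

theory Submission
  imports Defs
begin

text \<open>For \<open>\<rho> > 0\<close> the intersection condition \<open>\<rho> v(\<rho>) = \<rho> (w - p(\<rho>))\<close> just says
  \<open>v(\<rho>) + p(\<rho>) = w\<close>, which has a solution in \<open>[R', R'']\<close> by the intermediate value theorem.
  Since \<open>p\<close> is strictly increasing and \<open>v(R'') > 0\<close>, we have \<open>R'' < R\<^sub>m\<^sub>a\<^sub>x\<close>, so the solution
  lies in \<open>[R', R\<^sub>m\<^sub>a\<^sub>x]\<close> as well. At the solution the slope of \<open>\<rho> (w - p(\<rho>))\<close> is
  \<open>w - p(\<rho>) - \<rho> p'(\<rho>) = v(\<rho>) - \<rho> p'(\<rho>) < 0\<close>.\<close>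

lemma strict_mono_on_atLeast_if_deriv_pos:
  fixes f f' :: "real \<Rightarrow> real"
  assumes deriv: "\<And>x. a \<le> x \<Longrightarrow> (f has_real_derivative f' x) (at x within {a..})"
    and pos: "\<And>x. a \<le> x \<Longrightarrow> 0 < f' x"
  shows "strict_mono_on {a..} f"
proof (rule strict_mono_onI)
  fix x y assume xy: "x \<in> {a..}" "y \<in> {a..}" "x < y"
  have cont: "continuous_on {a..} f"
    using deriv by (intro DERIV_continuous_on) auto
  show "f x < f y"
  proof (rule DERIV_pos_imp_increasing_open[OF \<open>x < y\<close>])
    fix t assume t: "x < t" "t < y"
    have "at t within {a..} = at t"
      using xy t by (intro at_within_interior) auto
    then show "\<exists>d. (f has_real_derivative d) (at t) \<and> 0 < d"
      using deriv pos xy t by (metis atLeast_iff le_less_trans less_imp_le)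
  next
    show "continuous_on {x..y} f"
      using xy by (intro continuous_on_subset[OF cont]) auto
  qed
qed

lemma flux_deriv_neg_if_speed_less:
  fixes p :: "real \<Rightarrow> real"
  assumes "(p has_real_derivative p') (at r within S)"
    and "w = u + p r" and "u < r * p'"
  shows "\<exists>D < 0. ((\<lambda>\<rho>. \<rho> * (w - p \<rho>)) has_real_derivative D) (at r within S)"
proof (intro exI conjI)
  show "((\<lambda>\<rho>. \<rho> * (w - p \<rho>)) has_real_derivative w - p r - r * p') (at r within S)"
    using assms(1) by (auto intro!: derivative_eq_intros)
  show "w - p r - r * p' < 0"
    using assms(2,3) by simp
qed

theorem lemma1:
  fixes v v1 v2 p p1 p2 :: "real \<Rightarrow> real" and Rp Rpp Rmax :: real
  assumes Rpp_pos: "0 < Rpp"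
    and Rp: "0 < Rp" "Rp < Rpp"
    and v_d1: "\<forall>\<rho>\<in>{0..Rpp}. (v has_real_derivative v1 \<rho>) (at \<rho> within {0..Rpp})"
    and v_d2: "\<forall>\<rho>\<in>{0..Rpp}. (v1 has_real_derivative v2 \<rho>) (at \<rho> within {0..Rpp})"
    and v_c2: "continuous_on {0..Rpp} v2"
    and v_nonneg: "\<forall>\<rho>\<in>{0..Rpp}. 0 \<le> v \<rho>"
    and v_end: "0 < v Rpp"
    and v_cond: "\<forall>\<rho>\<in>{0..Rpp}. v1 \<rho> \<le> 0 \<and> 0 < v \<rho> + \<rho> * v1 \<rho> \<and> 2 * v1 \<rho> + \<rho> * v2 \<rho> \<le> 0"
    and p_d1: "\<forall>\<rho>\<in>{Rp..}. (p has_real_derivative p1 \<rho>) (at \<rho> within {Rp..})"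
    and p_d2: "\<forall>\<rho>\<in>{Rp..}. (p1 has_real_derivative p2 \<rho>) (at \<rho> within {Rp..})"
    and p_c2: "continuous_on {Rp..} p2"
    and p_cond: "\<forall>\<rho>\<in>{Rp..}. 0 < p1 \<rho> \<and> 0 < 2 * p1 \<rho> + \<rho> * p2 \<rho>"
    and vp_mono: "mono_on {Rp..Rpp} (\<lambda>\<rho>. v \<rho> + p \<rho>)"
    and vp_less: "\<forall>\<rho>\<in>{Rp..Rpp}. v \<rho> < \<rho> * p1 \<rho>"
    and Rmax: "Rp \<le> Rmax" "p Rmax = p Rpp + v Rpp"
  shows "\<forall>w\<in>{p Rp + v Rp .. p Rpp + v Rpp}.
           \<exists>\<rho>. 0 < \<rho> \<and> \<rho> \<in> {0..Rpp} \<and> \<rho> \<in> {Rp..Rmax} \<and>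
               \<rho> * v \<rho> = \<rho> * (w - p \<rho>) \<and>
               (\<exists>D < 0. ((\<lambda>r. r * (w - p r)) has_real_derivative D) (at \<rho> within {Rp..Rmax}))"
proof
  fix w assume w: "w \<in> {p Rp + v Rp .. p Rpp + v Rpp}"
  have p_strict_mono: "strict_mono_on {Rp..} p"
    using p_d1 p_cond by (intro strict_mono_on_atLeast_if_deriv_pos) auto
  have "Rpp < Rmax"
    using strict_mono_on_leD[OF p_strict_mono, of Rmax Rpp] Rmax Rp v_end
    by (cases "Rpp < Rmax") auto
  have "continuous_on {0..Rpp} v" "continuous_on {Rp..} p"
    using v_d1 p_d1 by (auto intro: DERIV_continuous_on)
  then have "continuous_on {Rp..Rpp} (\<lambda>\<rho>. v \<rho> + p \<rho>)"
    using Rp by (intro continuous_on_add) (auto elim: continuous_on_subset)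
  then obtain r where r: "Rp \<le> r" "r \<le> Rpp" "w = v r + p r"
    using IVT'[of "\<lambda>\<rho>. v \<rho> + p \<rho>" Rp w Rpp] w Rp by auto
  have "(p has_real_derivative p1 r) (at r within {Rp..Rmax})"
    using p_d1 r by (auto intro: has_field_derivative_subset)
  then have "\<exists>D < 0. ((\<lambda>\<rho>. \<rho> * (w - p \<rho>)) has_real_derivative D) (at r within {Rp..Rmax})"
    using r vp_less by (intro flux_deriv_neg_if_speed_less) auto
  then show "\<exists>\<rho>. 0 < \<rho> \<and> \<rho> \<in> {0..Rpp} \<and> \<rho> \<in> {Rp..Rmax} \<and>
               \<rho> * v \<rho> = \<rho> * (w - p \<rho>) \<and>
               (\<exists>D < 0. ((\<lambda>r. r * (w - p r)) has_real_derivative D) (at \<rho> within {Rp..Rmax}))"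
    using r Rp \<open>Rpp < Rmax\<close> by (intro exI[of _ r]) auto
qed

end
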